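(* Let $n_0,n_1,n_\infty$ be integers with $1\le n_0\le n_1\le n_\infty$ and $n=n_0+n_1+n_\infty$, and let $\overline{\mathcal{S}}=\{[\xi:\eta:\zeta]\in\mathbb{CP}^2 : \zeta^{n-n_0-n_1}\eta^n-\xi^{n-n_0}(\zeta-\xi)^{n-n_1}=0\}$. Then the singular points of $\overline{\mathcal{S}}$ are $[0:0:1]$, $[1:0:1]$, and, if $n_\infty>1$, also $[0:1:0]$. *)

theory Defs
  imports "HOL-Analysis.Analysis"
begin

definition curveF :: "nat \<Rightarrow> nat \<Rightarrow> nat \<Rightarrow> complex \<Rightarrow> complex \<Rightarrow> complex \<Rightarrow> complex" where
  "curveF n0 n1 ninf \<xi> \<eta> \<zeta> =
     (let n = n0 + n1 + ninf in \<zeta> ^ (n - n0 - n1) * \<eta> ^ n - \<xi> ^ (n - n0) * (\<zeta> - \<xi>) ^ (n - n1))"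

definition singular_point ::
  "(complex \<Rightarrow> complex \<Rightarrow> complex \<Rightarrow> complex) \<Rightarrow> complex \<Rightarrow> complex \<Rightarrow> complex \<Rightarrow> bool" where
  "singular_point F x y z \<longleftrightarrow>
     (x, y, z) \<noteq> (0, 0, 0) \<and> F x y z = 0 \<and>
     deriv (\<lambda>t. F t y z) x = 0 \<and> deriv (\<lambda>t. F x t z) y = 0 \<and> deriv (\<lambda>t. F x y t) z = 0"

definition proj_eq :: "complex \<times> complex \<times> complex \<Rightarrow> complex \<times> complex \<times> complex \<Rightarrow> bool" where
  "proj_eq p q \<longleftrightarrow> (\<exists>c. c \<noteq> 0 \<and> fst p = c * fst q \<and> fst (snd p) = c * fst (snd q)
                          \<and> snd (snd p) = c * snd (snd q))"

end

theory Submission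
  imports Defs
begin

text \<open>Writing the curve as \<open>z\<^sup>c y\<^sup>n = x\<^sup>a (z - x)\<^sup>b\<close> with \<open>a, b, n \<ge> 2\<close>:
  if \<open>y = 0\<close>, the curve forces \<open>x = 0\<close> or \<open>x = z\<close>, and there all partial derivatives vanish
  because every exponent is at least 2. If \<open>y \<noteq> 0\<close>, the \<open>y\<close>-derivative forces \<open>z = 0\<close>, the curve
  then forces \<open>x = 0\<close>, and the \<open>z\<close>-derivative \<open>c z\<^sup>c\<^sup>-\<^sup>1 y\<^sup>n\<close> vanishes exactly when \<open>c > 1\<close>.\<close>

definition curve_poly :: "nat \<Rightarrow> nat \<Rightarrow> nat \<Rightarrow> nat \<Rightarrow> 'a \<Rightarrow> 'a \<Rightarrow> 'a \<Rightarrow> 'a::real_normed_field"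
  where "curve_poly a b c n x y z = z ^ c * y ^ n - x ^ a * (z - x) ^ b"

lemma curveF_eq_curve_poly:
  "curveF n0 n1 ninf = curve_poly (n1 + ninf) (n0 + ninf) ninf (n0 + n1 + ninf)"
  by (simp add: fun_eq_iff curveF_def curve_poly_def Let_def)

lemma deriv_curve_poly_x:
  "deriv (\<lambda>t. curve_poly a b c n t y z) x
     = of_nat b * x ^ a * (z - x) ^ (b - 1) - of_nat a * x ^ (a - 1) * (z - x) ^ b"
  unfolding curve_poly_def
  by (rule DERIV_imp_deriv) (auto intro!: derivative_eq_intros simp: algebra_simps)

lemma deriv_curve_poly_y:
  "deriv (\<lambda>t. curve_poly a b c n x t z) y = of_nat n * z ^ c * y ^ (n - 1)"
  unfolding curve_poly_def
  by (rule DERIV_imp_deriv) (auto intro!: derivative_eq_intros simp: algebra_simps)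

lemma deriv_curve_poly_z:
  "deriv (\<lambda>t. curve_poly a b c n x y t) z
     = of_nat c * z ^ (c - 1) * y ^ n - of_nat b * x ^ a * (z - x) ^ (b - 1)"
  unfolding curve_poly_def
  by (rule DERIV_imp_deriv) (auto intro!: derivative_eq_intros simp: algebra_simps)

lemma singular_point_curve_poly_iff:
  fixes x y z :: complex
  assumes "a \<ge> 2" "b \<ge> 2" "n \<ge> 2"
  shows "singular_point (curve_poly a b c n) x y z \<longleftrightarrow>
           (x, y, z) \<noteq> (0, 0, 0) \<and>
           ((x = 0 \<and> y = 0) \<or> (y = 0 \<and> z = x) \<or> (c > 1 \<and> x = 0 \<and> z = 0))"
proof -
  let ?F = "z ^ c * y ^ n - x ^ a * (z - x) ^ b"
  let ?Fx = "of_nat b * x ^ a * (z - x) ^ (b - 1) - of_nat a * x ^ (a - 1) * (z - x) ^ b"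
  let ?Fy = "of_nat n * z ^ c * y ^ (n - 1)"
  let ?Fz = "of_nat c * z ^ (c - 1) * y ^ n - of_nat b * x ^ a * (z - x) ^ (b - 1)"
  have "?F = 0 \<and> ?Fx = 0 \<and> ?Fy = 0 \<and> ?Fz = 0 \<longleftrightarrow>
          (x = 0 \<and> y = 0) \<or> (y = 0 \<and> z = x) \<or> (c > 1 \<and> x = 0 \<and> z = 0)"
  proof
    assume crit: "?F = 0 \<and> ?Fx = 0 \<and> ?Fy = 0 \<and> ?Fz = 0"
    show "(x = 0 \<and> y = 0) \<or> (y = 0 \<and> z = x) \<or> (c > 1 \<and> x = 0 \<and> z = 0)"
    proof (cases "y = 0")
      case True
      have "x ^ a * (z - x) ^ b = z ^ c * y ^ n" using crit by simp
      also have "\<dots> = 0" using True assms by simp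
      finally show ?thesis using True by auto
    next
      case False
      then have "z = 0" "c > 0" using crit assms by (auto simp: gr0_conv_Suc)
      have "x ^ a * (z - x) ^ b = z ^ c * y ^ n" using crit by simp
      also have "\<dots> = 0" using \<open>z = 0\<close> \<open>c > 0\<close> by simp
      finally have "x = 0" using \<open>z = 0\<close> assms by simp
      moreover have "c \<noteq> 1"
      proof
        assume "c = 1"
        then have "?Fz = y ^ n" using \<open>z = 0\<close> \<open>x = 0\<close> assms by simp
        then show False using crit \<open>y \<noteq> 0\<close> by simp
      qed
      ultimately show ?thesis using \<open>z = 0\<close> \<open>c > 0\<close> by simp
    qed
  next
    assume "(x = 0 \<and> y = 0) \<or> (y = 0 \<and> z = x) \<or> (c > 1 \<and> x = 0 \<and> z = 0)"
    then show "?F = 0 \<and> ?Fx = 0 \<and> ?Fy = 0 \<and> ?Fz = 0"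
      using assms by (auto simp: power_0_left)
  qed
  then show ?thesis
    unfolding singular_point_def deriv_curve_poly_x deriv_curve_poly_y deriv_curve_poly_z
    by (simp add: curve_poly_def)
qed

lemma proj_eq_001_iff: "proj_eq (x, y, z) (0, 0, 1) \<longleftrightarrow> x = 0 \<and> y = 0 \<and> z \<noteq> 0"
  by (auto simp: proj_eq_def)

lemma proj_eq_101_iff: "proj_eq (x, y, z) (1, 0, 1) \<longleftrightarrow> y = 0 \<and> z = x \<and> x \<noteq> 0"
  by (auto simp: proj_eq_def)

lemma proj_eq_010_iff: "proj_eq (x, y, z) (0, 1, 0) \<longleftrightarrow> x = 0 \<and> z = 0 \<and> y \<noteq> 0"
  by (auto simp: proj_eq_def)

theorem corollary2:
  fixes n0 n1 ninf :: nat
  assumes "1 \<le> n0" "n0 \<le> n1" "n1 \<le> ninf"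
  shows "\<forall>x y z. (x, y, z) \<noteq> (0, 0, 0) \<longrightarrow>
           (singular_point (curveF n0 n1 ninf) x y z \<longleftrightarrow>
              proj_eq (x, y, z) (0, 0, 1) \<or> proj_eq (x, y, z) (1, 0, 1) \<or>
              (ninf > 1 \<and> proj_eq (x, y, z) (0, 1, 0)))"
proof (intro allI impI)
  fix x y z :: complex
  assume "(x, y, z) \<noteq> (0, 0, 0)"
  moreover have "singular_point (curveF n0 n1 ninf) x y z \<longleftrightarrow>
      (x, y, z) \<noteq> (0, 0, 0) \<and>
      ((x = 0 \<and> y = 0) \<or> (y = 0 \<and> z = x) \<or> (ninf > 1 \<and> x = 0 \<and> z = 0))"
    unfolding curveF_eq_curve_poly using assms by (intro singular_point_curve_poly_iff) auto
  ultimately show "singular_point (curveF n0 n1 ninf) x y z \<longleftrightarrow>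
      proj_eq (x, y, z) (0, 0, 1) \<or> proj_eq (x, y, z) (1, 0, 1) \<or>
      (ninf > 1 \<and> proj_eq (x, y, z) (0, 1, 0))"
    unfolding proj_eq_001_iff proj_eq_101_iff proj_eq_010_iff by auto
qed

end
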